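(* Let $G$ be a simple undirected graph (no loops, no multiple edges) with vertex set $\{v_1,\dots,v_n\}$ and $m$ edges, and let $\tau(G;x)=d_2(xI_n-A(G))$, where $A(G)$ is the adjacency matrix of $G$. Then $$(m-n)\,\tau(G;x)+x\,\tau'(G;x)=\sum_{v_sv_t\in E(G)}\big[\tau(G-v_sv_t;x)+\tau(G-v_s-v_t;x)\big],$$ where $\tau'$ is the derivative with respect to $x$, $G-v_sv_t$ is $G$ with the edge $v_sv_t$ deleted, and $G-v_s-v_t$ is $G$ with the vertices $v_s,v_t$ deleted (so $\tau(G-v_s-v_t;x)=d_2(xI_{n-2}-A(G-v_s-v_t))$).
   Context: For an $k\times k$ matrix $M=(m_{ij})$ ($k\ge 2$), the second immanant is $d_2(M)=\sum_{\sigma\in S_k}\chi_2(\sigma)\prod_{s=1}^k m_{s\sigma(s)}$, where $\chi_2$ is the irreducible character of $S_k$ corresponding to the partition $(2,1^{k-2})$. It satisfies $d_2(X)=\sum_{i=1}^k x_{ii}\det(X(i))-\det(X)$, where $X(i)$ is $X$ with row and column $i$ deleted; for matrices of order less than $2$, $d_2$ is understood via this identity, with the determinant of the empty matrix equal to $1$. *)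

theory Defs
  imports "HOL-Combinatorics.Permutations" "HOL-Computational_Algebra.Polynomial"
begin

text \<open>The irreducible character of the symmetric group on a finite index set I
  corresponding to the partition (2,1^(k-2)), k = card I: it is the sign
  character times the standard character, i.e. chi_2(sigma) = sign(sigma) * (fix(sigma) - 1).\<close>
definition chi2 :: "'a set \<Rightarrow> ('a \<Rightarrow> 'a) \<Rightarrow> int" where
  "chi2 I \<sigma> = sign \<sigma> * (int (card {i \<in> I. \<sigma> i = i}) - 1)"

definition d2 :: "'a set \<Rightarrow> ('a \<Rightarrow> 'a \<Rightarrow> 'b::comm_ring_1) \<Rightarrow> 'b" where
  "d2 I M = (\<Sum>\<sigma> \<in> {\<sigma>. \<sigma> permutes I}. of_int (chi2 I \<sigma>) * (\<Prod>i\<in>I. M i (\<sigma> i)))"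

definition simple_graph :: "'a set \<Rightarrow> ('a \<Rightarrow> 'a \<Rightarrow> bool) \<Rightarrow> bool" where
  "simple_graph V E \<longleftrightarrow> finite V \<and> (\<forall>u v. E u v \<longrightarrow> u \<in> V \<and> v \<in> V)
     \<and> (\<forall>u v. E u v \<longrightarrow> E v u) \<and> (\<forall>u. \<not> E u u)"

definition edges :: "('a \<Rightarrow> 'a \<Rightarrow> bool) \<Rightarrow> 'a set set" where
  "edges E = {{u, v} | u v. E u v}"

definition adj_matrix :: "('a \<Rightarrow> 'a \<Rightarrow> bool) \<Rightarrow> 'a \<Rightarrow> 'a \<Rightarrow> real poly" where
  "adj_matrix E i j = (if E i j then 1 else 0)"

definition tau :: "'a set \<Rightarrow> ('a \<Rightarrow> 'a \<Rightarrow> bool) \<Rightarrow> real poly" where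
  "tau V E = d2 V (\<lambda>i j. (if i = j then [:0, 1:] else 0) - adj_matrix E i j)"

definition del_edge :: "('a \<Rightarrow> 'a \<Rightarrow> bool) \<Rightarrow> 'a set \<Rightarrow> 'a \<Rightarrow> 'a \<Rightarrow> bool" where
  "del_edge E e = (\<lambda>a b. E a b \<and> {a, b} \<noteq> e)"

definition del_verts :: "('a \<Rightarrow> 'a \<Rightarrow> bool) \<Rightarrow> 'a set \<Rightarrow> 'a \<Rightarrow> 'a \<Rightarrow> bool" where
  "del_verts E S = (\<lambda>a b. E a b \<and> a \<notin> S \<and> b \<notin> S)"

end

theory Submission
  imports Defs
begin

text \<open>Expand \<open>\<tau>(G;x) = d\<^sub>2(xI - A)\<close> as a sum over the permutations \<open>\<sigma>\<close> of the vertices.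
  The \<open>\<sigma>\<close>-term is \<open>x\<close> to the number of fixed points of \<open>\<sigma>\<close> times a constant, so \<open>x d/dx\<close>
  multiplies it by that number; it vanishes unless every moved vertex \<open>i\<close> is adjacent to \<open>\<sigma> i\<close>.
  Deleting an edge \<open>e\<close> kills exactly the terms in which \<open>\<sigma>\<close> maps an end of \<open>e\<close> to the other,
  and splitting off the transposition of the ends of \<open>e\<close> shows that \<open>\<tau>(G - v\<^sub>s - v\<^sub>t)\<close>
  collects, with a minus sign, the terms in which \<open>\<sigma>\<close> swaps them. Hence the right-hand side
  weights the \<open>\<sigma>\<close>-term by the number of edges not of the form \<open>{i, \<sigma> i}\<close> minus the number of
  2-cycles of \<open>\<sigma>\<close>. Counting the moved vertices through the edges \<open>{i, \<sigma> i}\<close>, each 2-cycle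
  being hit twice, shows that this weight is \<open>m - n + #fix(\<sigma>)\<close>.\<close>

definition immanant_term :: "'a set \<Rightarrow> ('a \<Rightarrow> 'a \<Rightarrow> 'b::comm_ring_1) \<Rightarrow> ('a \<Rightarrow> 'a) \<Rightarrow> 'b" where
  "immanant_term I M \<sigma> = of_int (chi2 I \<sigma>) * (\<Prod>i\<in>I. M i (\<sigma> i))"

lemma d2_eq_sum_immanant_term: "d2 I M = (\<Sum>\<sigma> | \<sigma> permutes I. immanant_term I M \<sigma>)"
  by (simp add: d2_def immanant_term_def)

lemma d2_cong:
  assumes "\<And>i j. i \<in> I \<Longrightarrow> j \<in> I \<Longrightarrow> M i j = N i j"
  shows "d2 I M = d2 I N"
  unfolding d2_def using assms
  by (intro sum.cong prod.cong refl arg_cong2[where f = "(*)"]) (auto dest: permutes_in_image)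

lemma d2_vanishing_entries:
  assumes "finite I"
  shows "d2 I (\<lambda>i j. if Z i j then 0 else M i j)
    = (\<Sum>\<sigma> | \<sigma> permutes I. if \<forall>i\<in>I. \<not> Z i (\<sigma> i) then immanant_term I M \<sigma> else 0)"
  unfolding d2_eq_sum_immanant_term
proof (rule sum.cong)
  fix \<sigma>
  show "immanant_term I (\<lambda>i j. if Z i j then 0 else M i j) \<sigma>
    = (if \<forall>i\<in>I. \<not> Z i (\<sigma> i) then immanant_term I M \<sigma> else 0)"
  proof (cases "\<forall>i\<in>I. \<not> Z i (\<sigma> i)")
    case False
    then obtain i where "i \<in> I" "Z i (\<sigma> i)" by blast
    with assms have "(\<Prod>j\<in>I. if Z j (\<sigma> j) then 0 else M j (\<sigma> j)) = 0"
      by (intro prod_zero) auto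
    then show ?thesis unfolding if_not_P[OF False] immanant_term_def by simp
  qed (auto simp: immanant_term_def intro: prod.cong)
qed simp

lemma x_pderiv_monom:
  "[:0, 1:] * pderiv (monom c n) = of_nat n * monom (c::'a::idom) n"
proof (cases n)
  case (Suc k)
  have "[:0, 1:] * monom a k = monom a (Suc k)" for a :: 'a
    by (simp add: monom_Suc)
  with Suc show ?thesis by (simp add: pderiv_monom of_nat_poly smult_monom)
qed (simp add: pderiv_monom)

lemma x_pderiv_perm_prod:
  fixes M :: "'a \<Rightarrow> 'a \<Rightarrow> 'b::idom poly"
  assumes "finite I" and diag: "\<And>i. i \<in> I \<Longrightarrow> M i i = [:0, 1:]"
    and off_diag: "\<And>i j. i \<in> I \<Longrightarrow> i \<noteq> j \<Longrightarrow> degree (M i j) = 0"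
  shows "[:0, 1:] * pderiv (\<Prod>i\<in>I. M i (\<sigma> i))
    = of_nat (card {i\<in>I. \<sigma> i = i}) * (\<Prod>i\<in>I. M i (\<sigma> i))"
proof -
  let ?moved = "{i\<in>I. \<sigma> i \<noteq> i}"
  have "(\<Prod>i\<in>I. M i (\<sigma> i)) = (\<Prod>i\<in>{i\<in>I. \<sigma> i = i}. M i (\<sigma> i)) * (\<Prod>i\<in>?moved. M i (\<sigma> i))"
    using assms(1) by (subst prod.union_disjoint[symmetric]) (auto intro: prod.cong)
  also have "(\<Prod>i\<in>{i\<in>I. \<sigma> i = i}. M i (\<sigma> i)) = [:0, 1:] ^ card {i\<in>I. \<sigma> i = i}"
    using diag by simp
  also have "(\<Prod>i\<in>?moved. M i (\<sigma> i)) = [:\<Prod>i\<in>?moved. coeff (M i (\<sigma> i)) 0:]"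
    unfolding prod_to_poly[symmetric] using off_diag
    by (intro prod.cong refl) (metis (mono_tags) degree_0_id mem_Collect_eq)
  also have "[:0, 1:] ^ card {i\<in>I. \<sigma> i = i} * [:\<Prod>i\<in>?moved. coeff (M i (\<sigma> i)) 0:]
    = monom (\<Prod>i\<in>?moved. coeff (M i (\<sigma> i)) 0) (card {i\<in>I. \<sigma> i = i})"
    by (simp add: monom_altdef)
  finally show ?thesis by (simp only: x_pderiv_monom)
qed

lemma x_pderiv_d2:
  fixes M :: "'a \<Rightarrow> 'a \<Rightarrow> 'b::idom poly"
  assumes "finite I" and "\<And>i. i \<in> I \<Longrightarrow> M i i = [:0, 1:]"
    and "\<And>i j. i \<in> I \<Longrightarrow> i \<noteq> j \<Longrightarrow> degree (M i j) = 0"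
  shows "[:0, 1:] * pderiv (d2 I M)
    = (\<Sum>\<sigma> | \<sigma> permutes I. of_nat (card {i\<in>I. \<sigma> i = i}) * immanant_term I M \<sigma>)"
proof -
  have "pderiv (d2 I M) = (\<Sum>\<sigma> | \<sigma> permutes I. pderiv (immanant_term I M \<sigma>))"
    using higher_pderiv_sum[of 1] by (simp add: d2_eq_sum_immanant_term)
  then show ?thesis
    using x_pderiv_perm_prod[of I M, OF assms]
    by (simp add: sum_distrib_left immanant_term_def of_int_poly pderiv_smult mult.left_commute)
qed

lemma bij_betw_transpose_compose_permutes:
  assumes "s \<in> I" "t \<in> I"
  shows "bij_betw (\<lambda>\<sigma>. transpose s t \<circ> \<sigma>)
    {\<sigma>. \<sigma> permutes (I - {s, t})} {\<sigma>. \<sigma> permutes I \<and> \<sigma> s = t \<and> \<sigma> t = s}"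
    (is "bij_betw ?f ?A ?B")
proof (rule bij_betwI[where g = ?f])
  have "transpose s t \<circ> \<sigma> permutes I" if "\<sigma> permutes I - {s, t}" for \<sigma>
    using assms that by (blast intro: permutes_compose permutes_swap_id permutes_subset)
  then show "?f \<in> ?A \<rightarrow> ?B"
    by (auto dest: permutes_not_in)
  have "transpose s t \<circ> \<sigma> permutes I - {s, t}" if "\<sigma> permutes I" "\<sigma> s = t" "\<sigma> t = s" for \<sigma>
    using that
    by (intro permutes_superset[OF permutes_compose[OF that(1) permutes_swap_id[OF assms]]]) auto
  then show "?f \<in> ?B \<rightarrow> ?A"
    by auto
qed (simp_all add: comp_assoc[symmetric])

lemma chi2_transpose_compose:
  assumes "finite I" "s \<in> I" "t \<in> I" "s \<noteq> t" and \<sigma>: "\<sigma> permutes I - {s, t}"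
  shows "chi2 I (transpose s t \<circ> \<sigma>) = - chi2 (I - {s, t}) \<sigma>"
proof -
  have "sign (transpose s t \<circ> \<sigma>) = - sign \<sigma>"
    using assms permutes_imp_permutation[OF _ \<sigma>]
    by (simp add: sign_compose permutation_swap_id sign_swap_id)
  moreover have "{i\<in>I. (transpose s t \<circ> \<sigma>) i = i} = {i\<in>I - {s, t}. \<sigma> i = i}"
  proof -
    have "(transpose s t \<circ> \<sigma>) i = \<sigma> i" if "i \<in> I - {s, t}" for i
    proof -
      have "\<sigma> i \<in> I - {s, t}" using that by (simp only: permutes_in_image[OF \<sigma>])
      then show ?thesis by simp
    qed
    moreover have "\<sigma> s = s" "\<sigma> t = t"
      using permutes_not_in[OF \<sigma>] by auto
    ultimately show ?thesis using \<open>s \<noteq> t\<close> by force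
  qed
  ultimately show ?thesis unfolding chi2_def by simp
qed

lemma immanant_term_transpose_compose:
  assumes "finite I" "s \<in> I" "t \<in> I" "s \<noteq> t" and \<sigma>: "\<sigma> permutes I - {s, t}"
  shows "immanant_term I M (transpose s t \<circ> \<sigma>) = - (M s t * M t s * immanant_term (I - {s, t}) M \<sigma>)"
proof -
  have "(\<Prod>i\<in>I. M i ((transpose s t \<circ> \<sigma>) i))
      = M s t * (M t s * (\<Prod>i\<in>I - {s} - {t}. M i (transpose s t (\<sigma> i))))"
    using assms permutes_not_in[OF \<sigma>] by (simp add: prod.remove[of I s] prod.remove[of "I - {s}" t])
  also have "I - {s} - {t} = I - {s, t}" by blast
  also have "(\<Prod>i\<in>I - {s, t}. M i (transpose s t (\<sigma> i))) = (\<Prod>i\<in>I - {s, t}. M i (\<sigma> i))"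
  proof (rule prod.cong)
    fix i assume "i \<in> I - {s, t}"
    then have "\<sigma> i \<in> I - {s, t}" by (simp only: permutes_in_image[OF \<sigma>])
    then show "M i (transpose s t (\<sigma> i)) = M i (\<sigma> i)" by simp
  qed simp
  finally have "(\<Prod>i\<in>I. M i ((transpose s t \<circ> \<sigma>) i)) = M s t * M t s * (\<Prod>i\<in>I - {s, t}. M i (\<sigma> i))"
    by (simp only: mult.assoc)
  then show ?thesis
    using chi2_transpose_compose[OF assms] by (simp add: immanant_term_def algebra_simps)
qed

lemma sum_immanant_term_swapping:
  assumes "finite I" "s \<in> I" "t \<in> I" "s \<noteq> t"
  shows "(\<Sum>\<sigma> | \<sigma> permutes I \<and> \<sigma> s = t \<and> \<sigma> t = s. immanant_term I M \<sigma>)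
    = - (M s t * M t s * d2 (I - {s, t}) M)"
proof -
  have "(\<Sum>\<sigma> | \<sigma> permutes I \<and> \<sigma> s = t \<and> \<sigma> t = s. immanant_term I M \<sigma>)
      = (\<Sum>\<sigma> | \<sigma> permutes I - {s, t}. immanant_term I M (transpose s t \<circ> \<sigma>))"
    by (rule sum.reindex_bij_betw[OF bij_betw_transpose_compose_permutes[OF assms(2,3)], symmetric])
  also have "\<dots> = (\<Sum>\<sigma> | \<sigma> permutes I - {s, t}. - (M s t * M t s * immanant_term (I - {s, t}) M \<sigma>))"
    using immanant_term_transpose_compose[OF assms] by (intro sum.cong) auto
  finally show ?thesis
    by (simp add: d2_eq_sum_immanant_term sum_negf sum_distrib_left)
qed

definition two_cycles :: "('a \<Rightarrow> 'a) \<Rightarrow> 'a set set" where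
  "two_cycles \<sigma> = {{a, b} | a b. a \<noteq> b \<and> \<sigma> a = b \<and> \<sigma> b = a}"

lemma doubleton_in_two_cycles_iff:
  assumes "s \<noteq> t"
  shows "{s, t} \<in> two_cycles \<sigma> \<longleftrightarrow> \<sigma> s = t \<and> \<sigma> t = s"
  using assms by (auto simp: two_cycles_def doubleton_eq_iff)

lemma two_cycles_subset_image:
  "two_cycles \<sigma> \<subseteq> (\<lambda>i. {i, \<sigma> i}) ` {i. \<sigma> i \<noteq> i}"
  by (auto simp: two_cycles_def)

lemma card_moved_points:
  assumes "finite {i. \<sigma> i \<noteq> i}"
  shows "card {i. \<sigma> i \<noteq> i} = card ((\<lambda>i. {i, \<sigma> i}) ` {i. \<sigma> i \<noteq> i}) + card (two_cycles \<sigma>)"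
proof -
  let ?moved = "{i. \<sigma> i \<noteq> i}" and ?link = "\<lambda>i. {i, \<sigma> i}"
  have fibre: "card {j \<in> ?moved. ?link j = ?link i} = (if ?link i \<in> two_cycles \<sigma> then 2 else 1)"
    if "i \<in> ?moved" for i
  proof (cases "\<sigma> (\<sigma> i) = i")
    case True
    with that have "{j \<in> ?moved. ?link j = ?link i} = {i, \<sigma> i}"
      by (auto simp: doubleton_eq_iff)
    with True that show ?thesis by (simp add: doubleton_in_two_cycles_iff)
  next
    case False
    with that have "{j \<in> ?moved. ?link j = ?link i} = {i}"
      by (auto simp: doubleton_eq_iff)
    with False that show ?thesis by (simp add: doubleton_in_two_cycles_iff)
  qed
  have "card ?moved = (\<Sum>e \<in> ?link ` ?moved. card {j \<in> ?moved. ?link j = e})"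
    using sum.image_gen[OF assms, of "\<lambda>_. 1::nat" ?link] by simp
  also have "\<dots> = (\<Sum>e \<in> ?link ` ?moved. 1 + (if e \<in> two_cycles \<sigma> then 1 else 0))"
    using fibre by (intro sum.cong) auto
  also have "\<dots> = card (?link ` ?moved) + card {e \<in> ?link ` ?moved. e \<in> two_cycles \<sigma>}"
    using assms by (simp only: sum.distrib) (simp add: sum.inter_filter[symmetric])
  also have "{e \<in> ?link ` ?moved. e \<in> two_cycles \<sigma>} = two_cycles \<sigma>"
    using two_cycles_subset_image by blast
  finally show ?thesis .
qed

lemma simple_graph_edgeE:
  assumes "simple_graph V E" and "e \<in> edges E"
  obtains u v where "e = {u, v}" "E u v" "u \<noteq> v" "u \<in> V" "v \<in> V"
  using assms unfolding simple_graph_def edges_def by blast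

lemma finite_edges:
  assumes "simple_graph V E"
  shows "finite (edges E)"
proof (rule finite_subset)
  show "edges E \<subseteq> Pow V" using assms by (auto simp: simple_graph_def edges_def)
  show "finite (Pow V)" using assms by (simp add: simple_graph_def)
qed

lemma card_edges_fixed_points:
  assumes G: "simple_graph V E" and \<sigma>: "\<sigma> permutes V"
    and along_edges: "\<And>i. i \<in> V \<Longrightarrow> \<sigma> i \<noteq> i \<Longrightarrow> E i (\<sigma> i)"
  shows "card (edges E) + card {i\<in>V. \<sigma> i = i} + card (edges E \<inter> two_cycles \<sigma>)
    = card V + card {e\<in>edges E. \<forall>i\<in>V. {i, \<sigma> i} \<noteq> e}"
proof -
  let ?moved = "{i. \<sigma> i \<noteq> i}"
  let ?used = "(\<lambda>i. {i, \<sigma> i}) ` ?moved"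
  have "finite V" and irrefl: "\<And>u. \<not> E u u" using G by (simp_all add: simple_graph_def)
  have moved_in_V: "?moved \<subseteq> V" using permutes_not_in[OF \<sigma>] by blast
  then have "finite ?moved" using \<open>finite V\<close> by (rule finite_subset)
  have used: "?used \<subseteq> edges E"
    using moved_in_V along_edges unfolding edges_def by blast
  then have "card (edges E) = card ?used + card (edges E - ?used)"
    using finite_edges[OF G] by (simp add: card_Diff_subset card_mono finite_subset)
  moreover have "edges E - ?used = {e\<in>edges E. \<forall>i\<in>V. {i, \<sigma> i} \<noteq> e}"
  proof -
    have "{i, \<sigma> i} \<notin> edges E" if "\<sigma> i = i" for i
      using irrefl that unfolding edges_def by (auto simp: doubleton_eq_iff)
    then show ?thesis using moved_in_V by blast
  qed
  moreover have "edges E \<inter> two_cycles \<sigma> = two_cycles \<sigma>"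
    using used two_cycles_subset_image by blast
  moreover have "card V = card {i\<in>V. \<sigma> i = i} + card ?moved"
  proof -
    have "card ({i\<in>V. \<sigma> i = i} \<union> ?moved) = card {i\<in>V. \<sigma> i = i} + card ?moved"
      using \<open>finite V\<close> \<open>finite ?moved\<close> by (intro card_Un_disjoint) auto
    moreover have "{i\<in>V. \<sigma> i = i} \<union> ?moved = V" using moved_in_V by blast
    ultimately show ?thesis by simp
  qed
  ultimately show ?thesis
    using card_moved_points[OF \<open>finite ?moved\<close>] by simp
qed

definition char_matrix :: "('a \<Rightarrow> 'a \<Rightarrow> bool) \<Rightarrow> 'a \<Rightarrow> 'a \<Rightarrow> real poly" where
  "char_matrix E i j = (if i = j then [:0, 1:] else 0) - adj_matrix E i j"

lemma tau_eq_d2_char_matrix: "tau V E = d2 V (char_matrix E)"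
  by (simp add: tau_def char_matrix_def[abs_def])

lemma x_pderiv_tau:
  assumes "simple_graph V E"
  shows "[:0, 1:] * pderiv (tau V E)
    = (\<Sum>\<sigma> | \<sigma> permutes V. of_nat (card {i\<in>V. \<sigma> i = i}) * immanant_term V (char_matrix E) \<sigma>)"
  unfolding tau_eq_d2_char_matrix
  using assms by (intro x_pderiv_d2) (auto simp: simple_graph_def char_matrix_def adj_matrix_def)

lemma immanant_term_char_matrix_eq_0:
  assumes "finite V" "i \<in> V" "\<sigma> i \<noteq> i" "\<not> E i (\<sigma> i)"
  shows "immanant_term V (char_matrix E) \<sigma> = 0"
proof -
  have "char_matrix E i (\<sigma> i) = 0"
    using assms by (simp add: char_matrix_def adj_matrix_def)
  then have "(\<Prod>j\<in>V. char_matrix E j (\<sigma> j)) = 0"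
    using assms by (intro prod_zero) auto
  then show ?thesis by (simp add: immanant_term_def)
qed

lemma immanant_term_char_matrix_weight:
  assumes G: "simple_graph V E" and \<sigma>: "\<sigma> permutes V"
  shows "(of_nat (card {e\<in>edges E. \<forall>i\<in>V. {i, \<sigma> i} \<noteq> e}) - of_nat (card (edges E \<inter> two_cycles \<sigma>)))
      * immanant_term V (char_matrix E) \<sigma>
    = (of_nat (card (edges E)) - of_nat (card V) + of_nat (card {i\<in>V. \<sigma> i = i}))
      * immanant_term V (char_matrix E) \<sigma>"
proof (cases "\<forall>i\<in>V. \<sigma> i \<noteq> i \<longrightarrow> E i (\<sigma> i)")
  case True
  then have "card (edges E) + card {i\<in>V. \<sigma> i = i} + card (edges E \<inter> two_cycles \<sigma>)
    = card V + card {e\<in>edges E. \<forall>i\<in>V. {i, \<sigma> i} \<noteq> e}"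
    by (intro card_edges_fixed_points[OF G \<sigma>]) auto
  then have "int (card {e\<in>edges E. \<forall>i\<in>V. {i, \<sigma> i} \<noteq> e}) - int (card (edges E \<inter> two_cycles \<sigma>))
    = int (card (edges E)) - int (card V) + int (card {i\<in>V. \<sigma> i = i})"
    by linarith
  then have "(of_int (int (card {e\<in>edges E. \<forall>i\<in>V. {i, \<sigma> i} \<noteq> e})
      - int (card (edges E \<inter> two_cycles \<sigma>))) :: real poly)
    = of_int (int (card (edges E)) - int (card V) + int (card {i\<in>V. \<sigma> i = i}))"
    by (rule arg_cong)
  then show ?thesis by simp
next
  case False
  then show ?thesis
    using G by (auto simp: simple_graph_def dest: immanant_term_char_matrix_eq_0)
qed

lemma tau_del_edge:
  assumes G: "simple_graph V E" and "e \<in> edges E"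
  shows "tau V (del_edge E e)
    = (\<Sum>\<sigma> | \<sigma> permutes V. if \<forall>i\<in>V. {i, \<sigma> i} \<noteq> e then immanant_term V (char_matrix E) \<sigma> else 0)"
proof -
  obtain u v where e: "e = {u, v}" "E u v" "u \<noteq> v"
    using simple_graph_edgeE[OF assms] by metis
  have "char_matrix (del_edge E e) = (\<lambda>i j. if {i, j} = e then 0 else char_matrix E i j)"
    using G e
    by (auto simp: fun_eq_iff char_matrix_def adj_matrix_def del_edge_def simple_graph_def doubleton_eq_iff)
  then show ?thesis
    using G by (simp add: tau_eq_d2_char_matrix d2_vanishing_entries simple_graph_def if_not_P)
qed

lemma tau_del_verts:
  assumes G: "simple_graph V E" and "e \<in> edges E"
  shows "tau (V - e) (del_verts E e)
    = - (\<Sum>\<sigma> | \<sigma> permutes V. if e \<in> two_cycles \<sigma> then immanant_term V (char_matrix E) \<sigma> else 0)"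
proof -
  obtain s t where e: "e = {s, t}" "E s t" "s \<noteq> t" "s \<in> V" "t \<in> V"
    using simple_graph_edgeE[OF assms] by metis
  have "finite V" using G by (simp add: simple_graph_def)
  have "(\<Sum>\<sigma> | \<sigma> permutes V. if e \<in> two_cycles \<sigma> then immanant_term V (char_matrix E) \<sigma> else 0)
      = (\<Sum>\<sigma> | \<sigma> permutes V \<and> \<sigma> s = t \<and> \<sigma> t = s. immanant_term V (char_matrix E) \<sigma>)"
    using \<open>finite V\<close> e
    by (simp add: sum.inter_filter[symmetric] finite_permutations doubleton_in_two_cycles_iff)
  also have "\<dots> = - (char_matrix E s t * char_matrix E t s * d2 (V - e) (char_matrix E))"
    unfolding e(1) using \<open>finite V\<close> e(4,5,3) by (rule sum_immanant_term_swapping)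
  also have "char_matrix E s t * char_matrix E t s = 1"
    using G e by (auto simp: char_matrix_def adj_matrix_def simple_graph_def)
  also have "d2 (V - e) (char_matrix E) = tau (V - e) (del_verts E e)"
    unfolding tau_eq_d2_char_matrix
    by (rule d2_cong) (auto simp: char_matrix_def adj_matrix_def del_verts_def)
  finally show ?thesis by simp
qed

theorem lemma2p5:
  fixes V :: "'a set" and E :: "'a \<Rightarrow> 'a \<Rightarrow> bool"
  assumes "simple_graph V E"
  shows "smult (real (card (edges E)) - real (card V)) (tau V E) + [:0, 1:] * pderiv (tau V E)
         = (\<Sum>e \<in> edges E. tau V (del_edge E e) + tau (V - e) (del_verts E e))"
proof -
  let ?w = "immanant_term V (char_matrix E)"
  let ?P = "{\<sigma>. \<sigma> permutes V}"
  have "(\<Sum>e \<in> edges E. tau V (del_edge E e) + tau (V - e) (del_verts E e))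
      = (\<Sum>e \<in> edges E. \<Sum>\<sigma> \<in> ?P. (if \<forall>i\<in>V. {i, \<sigma> i} \<noteq> e then ?w \<sigma> else 0)
                                    - (if e \<in> two_cycles \<sigma> then ?w \<sigma> else 0))"
    using tau_del_edge[OF assms] tau_del_verts[OF assms] by (simp add: sum_subtractf)
  also have "\<dots> = (\<Sum>\<sigma> \<in> ?P. (of_nat (card {e\<in>edges E. \<forall>i\<in>V. {i, \<sigma> i} \<noteq> e})
                               - of_nat (card (edges E \<inter> two_cycles \<sigma>))) * ?w \<sigma>)"
    using finite_edges[OF assms]
    by (subst sum.swap) (simp add: sum_subtractf sum.inter_filter[symmetric] left_diff_distrib Int_def)
  also have "\<dots> = (\<Sum>\<sigma> \<in> ?P. (of_nat (card (edges E)) - of_nat (card V) + of_nat (card {i\<in>V. \<sigma> i = i})) * ?w \<sigma>)"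
    using immanant_term_char_matrix_weight[OF assms] by (intro sum.cong) auto
  also have "\<dots> = (of_nat (card (edges E)) - of_nat (card V)) * tau V E + [:0, 1:] * pderiv (tau V E)"
    unfolding x_pderiv_tau[OF assms] unfolding tau_eq_d2_char_matrix d2_eq_sum_immanant_term
    by (simp add: sum_distrib_left sum.distrib distrib_right)
  also have "(of_nat (card (edges E)) - of_nat (card V)) * tau V E
      = smult (real (card (edges E)) - real (card V)) (tau V E)"
    by (simp add: of_nat_poly)
  finally show ?thesis ..
qed

end
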